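(* (i) Let $r\geq 3$, let $p_1,\dots,p_r$ be distinct odd primes, $n=p_1\cdots p_r$ and $D=\{p_1,\dots,p_r\}$. Then the circulant graph $G(n;S)$ with $S=\bigcup_{d\in D}G_n(d)$ has diameter $2$. (ii) Let $p_1,\dots,p_r$ be distinct odd primes, $m=p_1\cdots p_r$, $n=2m^2$ and $D=\{(m/p_1)^2,\dots,(m/p_r)^2\}$. Then the circulant graph $G(n;S)$ with $S=\bigcup_{d\in D}G_n(d)$ has diameter $2r+1$.
   Context: For a divisor $d$ of $n$, $G_n(d)=\{k : 1\le k\le n-1,\ \gcd(k,n)=d\}$. For a set $S\subseteq\{1,\dots,n-1\}$ with $s\in S$ iff $n-s\in S$, the circulant graph $G(n;S)$ is the undirected graph on vertex set $\mathbb{Z}_n$ in which $i$ and $j$ are adjacent iff $i-j \bmod n\in S$. The diameter is the maximum over vertex pairs of the shortest-path distance. *)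

theory Defs
  imports Main "HOL-Library.Extended_Nat" "HOL-Computational_Algebra.Primes"
begin

definition Gn :: "nat \<Rightarrow> nat \<Rightarrow> nat set" where
  "Gn n d = {k. 1 \<le> k \<and> k \<le> n - 1 \<and> gcd k n = d}"

definition circ_adj :: "nat \<Rightarrow> nat set \<Rightarrow> nat \<Rightarrow> nat \<Rightarrow> bool" where
  "circ_adj n S i j \<longleftrightarrow> i < n \<and> j < n \<and> nat ((int i - int j) mod int n) \<in> S"

definition circ_walk :: "nat \<Rightarrow> nat set \<Rightarrow> nat \<Rightarrow> nat \<Rightarrow> nat \<Rightarrow> bool" where
  "circ_walk n S k i j \<longleftrightarrow> (\<exists>f :: nat \<Rightarrow> nat. f 0 = i \<and> f k = j \<and>
      (\<forall>t<k. circ_adj n S (f t) (f (Suc t))))"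

definition circ_dist :: "nat \<Rightarrow> nat set \<Rightarrow> nat \<Rightarrow> nat \<Rightarrow> enat" where
  "circ_dist n S i j = (if \<exists>k. circ_walk n S k i j
      then enat (LEAST k. circ_walk n S k i j) else \<infinity>)"

definition circ_diameter :: "nat \<Rightarrow> nat set \<Rightarrow> enat" where
  "circ_diameter n S = Sup {circ_dist n S i j | i j. i < n \<and> j < n}"

end

theory Submission
  imports Defs "HOL-Number_Theory.Cong"
begin

(*
  A walk of length k from i to j in G(n;S) exists iff i - j is congruent modulo n to a sum of
  k elements of S ("steps"), so the diameter is the least k such that every residue is a sum of
  at most k steps, provided some residue needs exactly k.

  (i) Let n = p_1 ... p_r.  Given x, pick primes p, p' with p = p' dividing x, or p, p' distinct
  and not dividing x.  By the Chinese remainder theorem there is a with a = 0 mod p, a = x mod p'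
  and a different from 0 and x modulo each other prime (these are at least 3).  Then
  gcd(a, n) = p and gcd(x - a, n) = p', so every residue is a sum of two steps; 1 is not a step.

  (ii) Let n = 2m^2.  The steps in G_n((m/p)^2) are the numbers (m/p)^2 u with u odd and prime
  to p: they are odd, prime to p, and divisible by q^2 for every other q.  Two of them reach any
  even residue modulo p^2 while vanishing modulo the other q^2, so every even residue is a sum of
  2r steps and every odd one a sum of 2r + 1.  Conversely, in a sum of steps congruent to m, for
  each p at least two summands are prime to p (with none p^2 would divide the sum, with one p would
  not), and there is an odd number of summands as the steps and m are odd: m needs 2r + 1 steps.
*)

section \<open>Walks in circulant graphs as sums of steps\<close>

definition step_sum :: "nat \<Rightarrow> nat set \<Rightarrow> nat \<Rightarrow> int \<Rightarrow> bool" where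
  "step_sum n S k x \<longleftrightarrow>
     (\<exists>xs. length xs = k \<and> set xs \<subseteq> S \<and> [int (sum_list xs) = x] (mod int n))"

lemma step_sum_0_iff: "step_sum n S 0 x \<longleftrightarrow> [0 = x] (mod int n)"
  by (simp add: step_sum_def)

lemma step_sum_1_iff: "step_sum n S 1 x \<longleftrightarrow> (\<exists>s\<in>S. [int s = x] (mod int n))"
  by (auto simp: step_sum_def length_Suc_conv)

lemma step_sum_cong: "step_sum n S k x \<Longrightarrow> [x = y] (mod int n) \<Longrightarrow> step_sum n S k y"
  unfolding step_sum_def using cong_trans by blast

lemma step_sum_add:
  assumes "step_sum n S k x" "step_sum n S l y"
  shows "step_sum n S (k + l) (x + y)"
proof -
  obtain xs where "length xs = k" "set xs \<subseteq> S" "[int (sum_list xs) = x] (mod int n)"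
    using assms(1) unfolding step_sum_def by blast
  moreover obtain ys where "length ys = l" "set ys \<subseteq> S" "[int (sum_list ys) = y] (mod int n)"
    using assms(2) unfolding step_sum_def by blast
  ultimately show ?thesis
    unfolding step_sum_def by (intro exI[of _ "xs @ ys"]) (auto intro: cong_add)
qed

lemma step_sum_sum:
  assumes "finite A" "\<And>a. a \<in> A \<Longrightarrow> step_sum n S (k a) (x a)"
  shows "step_sum n S (\<Sum>a\<in>A. k a) (\<Sum>a\<in>A. x a)"
  using assms by (induction A rule: finite_induct) (auto simp: step_sum_0_iff intro: step_sum_add)

lemma step_sum_1_of_gcd:
  assumes "d < n" "Gn n d \<subseteq> S" "gcd y (int n) = int d"
  shows "step_sum n S 1 y"
proof -
  define s where "s = nat (y mod int n)"
  have s: "int s = y mod int n"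
    unfolding s_def using assms(1) by simp
  have "gcd (int s) (int n) = int d"
    unfolding s using assms(3) by (metis gcd.commute gcd_red_int)
  then have "gcd s n = d"
    by (metis gcd_int_int_eq of_nat_eq_iff)
  moreover have "s \<noteq> 0"
    using \<open>gcd s n = d\<close> assms(1) by (cases "s = 0") auto
  moreover have "s < n"
    using s assms(1) by (metis of_nat_0_less_iff of_nat_less_iff order.strict_trans1 pos_mod_bound zero_le)
  ultimately have "s \<in> S"
    using assms(2) unfolding Gn_def by auto
  moreover have "[int s = y] (mod int n)"
    unfolding s by (simp add: cong_def)
  ultimately show ?thesis
    unfolding step_sum_1_iff by blast
qed

lemma Gn_subset_lessThan: "Gn n d \<subseteq> {..<n}"
  by (auto simp: Gn_def)

lemma circ_walk_imp_step_sum: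
  assumes "0 < n" "circ_walk n S k i j"
  shows "step_sum n S k (int i - int j)"
proof -
  obtain f where f: "f 0 = i" "f k = j" "\<And>t. t < k \<Longrightarrow> circ_adj n S (f t) (f (Suc t))"
    using assms(2) unfolding circ_walk_def by blast
  define step where "step t = nat ((int (f t) - int (f (Suc t))) mod int n)" for t
  have step: "int (step t) = (int (f t) - int (f (Suc t))) mod int n" for t
    unfolding step_def using assms(1) by simp
  have "int (sum_list (map step [0..<k])) = (\<Sum>t<k. (int (f t) - int (f (Suc t))) mod int n)"
    by (simp add: sum_list_distinct_conv_sum_set atLeast0LessThan step)
  also have "[\<dots> = (\<Sum>t<k. int (f t) - int (f (Suc t)))] (mod int n)"
    by (intro cong_sum) (simp add: cong_def)
  also have "(\<Sum>t<k. int (f t) - int (f (Suc t))) = int i - int j"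
    using sum_lessThan_telescope'[of "\<lambda>t. int (f t)" k] f(1,2) by simp
  finally have "[int (sum_list (map step [0..<k])) = int i - int j] (mod int n)" .
  moreover have "set (map step [0..<k]) \<subseteq> S"
    using f(3) by (auto simp: step_def circ_adj_def)
  ultimately show ?thesis
    unfolding step_sum_def by (intro exI[of _ "map step [0..<k]"]) simp
qed

lemma step_sum_imp_circ_walk:
  assumes "i < n" "j < n" "S \<subseteq> {..<n}" "step_sum n S k (int i - int j)"
  shows "circ_walk n S k i j"
proof -
  obtain xs where xs: "length xs = k" "set xs \<subseteq> S" "[int (sum_list xs) = int i - int j] (mod int n)"
    using assms(4) unfolding step_sum_def by blast
  define f where "f t = nat ((int i - int (sum_list (take t xs))) mod int n)" for t
  have f: "int (f t) = (int i - int (sum_list (take t xs))) mod int n" for t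
    unfolding f_def using assms(1) by simp
  have f_less: "f t < n" for t
    using f assms(1) by (metis of_nat_0_less_iff of_nat_less_iff order.strict_trans1 pos_mod_bound zero_le)
  have "f 0 = i"
    unfolding f_def using assms(1) by simp
  moreover have "f k = j"
  proof -
    have "[int i - int (sum_list xs) = int i - (int i - int j)] (mod int n)"
      by (intro cong_diff cong_refl xs(3))
    then show ?thesis
      using xs(1) assms(2) unfolding f_def by (simp add: cong_def)
  qed
  moreover have "circ_adj n S (f t) (f (Suc t))" if "t < k" for t
  proof -
    have take: "take (Suc t) xs = take t xs @ [xs ! t]"
      using that xs(1) by (simp add: take_Suc_conv_app_nth)
    have "xs ! t \<in> S"
      using that xs(1,2) by auto
    moreover have "(int (f t) - int (f (Suc t))) mod int n = int (xs ! t)"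
      using \<open>xs ! t \<in> S\<close> assms(3) unfolding f take by (auto simp: mod_diff_eq)
    ultimately show ?thesis
      unfolding circ_adj_def using f_less by simp
  qed
  ultimately show ?thesis
    unfolding circ_walk_def by blast
qed

lemma circ_dist_le: "circ_walk n S k i j \<Longrightarrow> circ_dist n S i j \<le> enat k"
  unfolding circ_dist_def by (auto intro: Least_le)

lemma circ_dist_eqI:
  "circ_walk n S k i j \<Longrightarrow> (\<And>l. circ_walk n S l i j \<Longrightarrow> k \<le> l) \<Longrightarrow> circ_dist n S i j = enat k"
  unfolding circ_dist_def by (auto intro!: Least_equality)

lemma circ_diameter_eqI:
  assumes S: "S \<subseteq> {..<n}"
    and upper: "\<And>x. \<exists>k\<le>D. step_sum n S k x"
    and ij: "i < n" "j < n"
    and lower: "\<And>k. step_sum n S k (int i - int j) \<Longrightarrow> D \<le> k"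
  shows "circ_diameter n S = enat D"
proof -
  have walk: "\<exists>k\<le>D. circ_walk n S k i' j'" if "i' < n" "j' < n" for i' j'
    using upper[of "int i' - int j'"] step_sum_imp_circ_walk[OF that S] by blast
  have lower_walk: "D \<le> k" if "circ_walk n S k i j" for k
    using lower circ_walk_imp_step_sum[OF _ that] ij by simp
  have "circ_dist n S i j = enat D"
    using walk[OF ij] lower_walk by (metis circ_dist_eqI le_antisym)
  moreover have "circ_dist n S i' j' \<le> enat D" if "i' < n" "j' < n" for i' j'
    using walk[OF that] circ_dist_le by (meson enat_ord_simps(1) order_trans)
  ultimately show ?thesis
    unfolding circ_diameter_def using ij by (intro cSup_eq_maximum) (force, blast)
qed

lemma even_eq_add_odd_not_dvd:
  fixes a :: int
  assumes "even a" "3 \<le> p"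
  obtains u v where "a = u + v" "odd u" "odd v" "\<not> int p dvd u" "\<not> int p dvd v"
proof -
  have "int p \<ge> 3"
    using assms(2) by simp
  then have not_dvd: "\<not> int p dvd 1" "\<not> int p dvd -1" "\<not> int p dvd 2"
    by (auto dest: zdvd_imp_le)
  show thesis
  proof (cases "int p dvd a - 1")
    case True
    then have "\<not> int p dvd a + 1"
      using not_dvd(3) dvd_diff[of "int p" "a + 1" "a - 1"] by auto
    then show thesis
      using that[of "-1" "a + 1"] assms(1) not_dvd(2) by simp
  next
    case False
    then show thesis
      using that[of 1 "a - 1"] assms(1) not_dvd(1) by simp
  qed
qed

lemma odd_sum_list_iff:
  "(\<And>s. s \<in> set xs \<Longrightarrow> odd (s :: nat)) \<Longrightarrow> odd (sum_list xs) \<longleftrightarrow> odd (length xs)"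
  by (induction xs) auto

lemma sum_list_filter_add_filter_not:
  "sum_list (filter R xs) + sum_list (filter (\<lambda>s. \<not> R s) xs) = (sum_list xs :: 'a :: comm_monoid_add)"
  by (induction xs) (auto simp: ac_simps)

lemma dvd_sum_list:
  fixes d :: "'a :: comm_semiring_1"
  shows "(\<And>s. s \<in> set xs \<Longrightarrow> d dvd s) \<Longrightarrow> d dvd sum_list xs"
  by (induction xs) auto

lemma length_eq_sum_length_filter:
  assumes "finite A" "\<And>s. s \<in> set xs \<Longrightarrow> card {a \<in> A. R a s} = 1"
  shows "length xs = (\<Sum>a\<in>A. length (filter (R a) xs))"
  using assms(2)
proof (induction xs)
  case Nil
  then show ?case
    by simp
next
  case (Cons s xs)
  have "(\<Sum>a\<in>A. length (filter (R a) (s # xs)))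
      = (\<Sum>a\<in>A. (if R a s then 1 else 0) + length (filter (R a) xs))"
    by (intro sum.cong) auto
  also have "\<dots> = card {a \<in> A. R a s} + length xs"
    using assms(1) Cons by (simp add: sum.distrib sum.inter_filter[symmetric])
  finally show ?case
    using Cons.prems by simp
qed

locale odd_prime_set =
  fixes P :: "nat set"
  assumes finite_P: "finite P"
    and prime_P: "p \<in> P \<Longrightarrow> prime p"
    and odd_P: "p \<in> P \<Longrightarrow> odd p"
begin

abbreviation m :: nat where "m \<equiv> \<Prod>P"

lemma m_pos: "0 < m"
  using finite_P prime_P by (simp add: prime_gt_0_nat prod_pos)

lemma odd_m: "odd m"
  using finite_P odd_P by (induction P rule: finite_induct) auto

lemma prime_ge_3: "p \<in> P \<Longrightarrow> 3 \<le> p"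
  using prime_P[of p] odd_P[of p] prime_ge_2_nat[of p] by presburger

lemma cofactor_eq: "p \<in> P \<Longrightarrow> m div p = \<Prod>(P - {p})"
  using finite_P prime_P[of p] by (simp add: prod.remove prime_gt_0_nat)

lemma m_eq_mult_cofactor: "p \<in> P \<Longrightarrow> m = p * (m div p)"
  using finite_P cofactor_eq by (simp add: prod.remove)

lemma prime_dvd_cofactor_iff:
  assumes "p \<in> P" "q \<in> P"
  shows "q dvd m div p \<longleftrightarrow> q \<noteq> p"
proof -
  have "q dvd \<Prod>(P - {p}) \<longleftrightarrow> (\<exists>r\<in>P - {p}. q dvd r)"
    using finite_P prime_P[OF assms(2)] by (simp add: prime_dvd_prod_iff)
  also have "\<dots> \<longleftrightarrow> q \<noteq> p"
  proof
    show "q \<noteq> p" if dvd_r: "\<exists>r\<in>P - {p}. q dvd r"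
    proof -
      obtain r where "r \<in> P - {p}" "q dvd r"
        using dvd_r by blast
      then show ?thesis
        using prime_P assms(2) primes_dvd_imp_eq[of q r] by auto
    qed
    show "\<exists>r\<in>P - {p}. q dvd r" if "q \<noteq> p"
      using that assms(2) by (intro bexI[of _ q]) auto
  qed
  finally show ?thesis
    using cofactor_eq[OF assms(1)] by simp
qed

lemma exists_other_prime:
  assumes "card P \<ge> 2" "p \<in> P"
  obtains q where "q \<in> P" "q \<noteq> p"
proof -
  have "0 < card (P - {p})"
    using assms finite_P by simp
  then obtain q where "q \<in> P - {p}"
    unfolding card_gt_0_iff by blast
  then show thesis
    using that by blast
qed

lemma prime_sq_not_dvd_m:
  assumes "p \<in> P"
  shows "\<not> p\<^sup>2 dvd m"
proof
  assume "p\<^sup>2 dvd m"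
  then have "p * p dvd p * (m div p)"
    by (simp add: power2_eq_square flip: m_eq_mult_cofactor[OF assms])
  then have "p dvd m div p"
    using prime_ge_3[OF assms] by simp
  then show False
    using prime_dvd_cofactor_iff[OF assms assms] by simp
qed

lemma gcd_m_eq_prime:
  assumes "p \<in> P" "int p dvd y" "\<And>q. q \<in> P \<Longrightarrow> q \<noteq> p \<Longrightarrow> \<not> int q dvd y"
  shows "gcd y (int m) = int p"
proof -
  have "coprime y (int q)" if "q \<in> P" "q \<noteq> p" for q
    using prime_imp_coprime[of "int q" y] assms(3)[OF that] prime_P[OF that(1)]
    by (simp add: coprime_commute)
  then have "coprime y (int (m div p))"
    unfolding cofactor_eq[OF assms(1)] of_nat_prod by (intro prod_coprime_right) auto
  then have "gcd y (int m) = gcd y (int p)"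
    by (subst m_eq_mult_cofactor[OF assms(1)]) (simp add: gcd_mult_right_right_cancel)
  then show ?thesis
    using assms(2) by simp
qed

lemma prime_dvd_m: "p \<in> P \<Longrightarrow> p dvd m"
  using dvd_prodI[OF finite_P, of p "\<lambda>q. q"] by simp

lemma one_less_m:
  assumes "P \<noteq> {}"
  shows "1 < m"
proof -
  obtain p where "p \<in> P"
    using assms by blast
  then have "3 \<le> m"
    using prime_ge_3 dvd_imp_le[OF prime_dvd_m m_pos] by (meson order_trans)
  then show ?thesis
    by simp
qed

lemma odd_cofactor: "p \<in> P \<Longrightarrow> odd (m div p)"
  using odd_m m_eq_mult_cofactor by (metis even_mult_iff)

subsection \<open>Steps of prime gcd\<close>

lemma exists_add_gcd_m_eq:
  assumes "p \<in> P" "p' \<in> P" "p dvd x \<longleftrightarrow> p = p'" "p' dvd x \<longleftrightarrow> p = p'"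
  obtains a b where "int x = a + b" "gcd a (int m) = int p" "gcd b (int m) = int p'"
proof -
  \<comment> \<open>Modulo a third prime q, a is 1 or 2, whichever differs from x; both are nonzero as q \<ge> 3.\<close>
  define u where "u q = (if q = p then 0 else if q = p' then x else if [x = 1] (mod q) then 2 else 1)"
    for q
  have "\<forall>i\<in>P. \<forall>j\<in>P. i \<noteq> j \<longrightarrow> coprime (id i) (id j)"
    using prime_P by (auto intro: primes_coprime)
  then obtain a where a: "\<And>q. q \<in> P \<Longrightarrow> [a = u q] (mod q)"
    using chinese_remainder_nat[OF finite_P, of id u] by auto
  have other: "\<not> q dvd u q" "\<not> [x = u q] (mod q)" if "q \<in> P" "q \<noteq> p" "q \<noteq> p'" for q
    using prime_ge_3[OF that(1)] that(2,3) by (auto simp: u_def cong_def dvd_eq_mod_eq_0)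
  have "gcd (int a) (int m) = int p"
  proof (rule gcd_m_eq_prime[OF assms(1)])
    show "int p dvd int a"
      using a[OF assms(1)] by (simp add: u_def cong_0_iff)
    show "\<not> int q dvd int a" if "q \<in> P" "q \<noteq> p" for q
    proof (cases "q = p'")
      case True
      then show ?thesis
        using a[OF that(1)] assms(4) that(2) by (simp add: u_def cong_dvd_iff)
    next
      case False
      then show ?thesis
        using a[OF that(1)] other[OF that False] by (simp add: cong_dvd_iff)
    qed
  qed
  moreover have "gcd (int x - int a) (int m) = int p'"
  proof (rule gcd_m_eq_prime[OF assms(2)])
    have "[x = a] (mod p')"
      using a[OF assms(2)] assms(3) by (cases "p = p'") (auto simp: u_def cong_sym cong_0_iff cong_def)
    then show "int p' dvd int x - int a"
      by (simp add: cong_iff_dvd_diff flip: cong_int_iff)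
    have "\<not> [x = a] (mod q)" if "q \<in> P" "q \<noteq> p'" for q
    proof (cases "q = p")
      case True
      then show ?thesis
        using a[OF that(1)] assms(3) that(2) by (auto simp: u_def cong_def dvd_eq_mod_eq_0)
    next
      case False
      then show ?thesis
        using a[OF that(1)] other[OF that(1) False that(2)] by (auto dest: cong_trans)
    qed
    then show "\<not> int q dvd int x - int a" if "q \<in> P" "q \<noteq> p'" for q
      using that by (simp add: cong_iff_dvd_diff flip: cong_int_iff)
  qed
  ultimately show thesis
    using that[of "int a" "int x - int a"] by simp
qed

lemma prime_less_m:
  assumes "card P \<ge> 2" "p \<in> P"
  shows "p < m"
proof -
  obtain q where "q \<in> P" "q \<noteq> p"
    using exists_other_prime[OF assms] .
  then have "q \<le> m div p"
    using prime_dvd_cofactor_iff[OF assms(2)] m_pos m_eq_mult_cofactor[OF assms(2)]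
    by (metis dvd_imp_le gr0I mult_0_right)
  then have "p * 3 \<le> m"
    using prime_ge_3[OF \<open>q \<in> P\<close>] m_eq_mult_cofactor[OF assms(2)]
    by (metis le_trans mult_le_mono2)
  then show ?thesis
    using prime_ge_3[OF assms(2)] by linarith
qed

lemma step_sum_2_prime_divisors:
  assumes "card P \<ge> 2"
  shows "step_sum m (\<Union>d\<in>P. Gn m d) 2 x"
proof -
  let ?S = "\<Union>d\<in>P. Gn m d"
  define x' where "x' = nat (x mod int m)"
  have x': "[int x' = x] (mod int m)"
    unfolding x'_def using m_pos by (simp add: cong_def del: of_nat_prod)
  obtain p p' where "p \<in> P" "p' \<in> P" "p dvd x' \<longleftrightarrow> p = p'" "p' dvd x' \<longleftrightarrow> p = p'"
  proof (cases "\<exists>p\<in>P. p dvd x'")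
    case True
    then show thesis
      using that by blast
  next
    case False
    obtain p where "p \<in> P"
      using assms by fastforce
    moreover obtain p' where "p' \<in> P" "p' \<noteq> p"
      using exists_other_prime[OF assms \<open>p \<in> P\<close>] .
    ultimately show thesis
      using that False by blast
  qed
  then obtain a b where ab: "int x' = a + b" "gcd a (int m) = int p" "gcd b (int m) = int p'"
    by (rule exists_add_gcd_m_eq)
  have "step_sum m ?S 1 a" "step_sum m ?S 1 b"
    using step_sum_1_of_gcd prime_less_m[OF assms] ab \<open>p \<in> P\<close> \<open>p' \<in> P\<close> by blast+
  then have "step_sum m ?S 2 (int x')"
    using step_sum_add[of m ?S 1 a 1 b] ab(1) by (simp add: numeral_2_eq_2)
  then show ?thesis
    using step_sum_cong x' by blast
qed

lemma step_sum_1_imp_ge_2: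
  assumes "P \<noteq> {}" "step_sum m (\<Union>d\<in>P. Gn m d) k 1"
  shows "2 \<le> k"
proof (rule ccontr)
  assume "\<not> 2 \<le> k"
  then consider "k = 0" | "k = 1"
    by linarith
  then show False
  proof cases
    case 1
    then show False
      using assms(2) one_less_m[OF assms(1)]
      by (simp add: step_sum_0_iff cong_def zmod_int[symmetric] del: of_nat_prod)
  next
    case 2
    then have "step_sum m (\<Union>d\<in>P. Gn m d) 1 1"
      using assms(2) by simp
    then obtain d s where "d \<in> P" "s \<in> Gn m d" "[int s = 1] (mod int m)"
      unfolding step_sum_1_iff by blast
    moreover have "s < m"
      using \<open>s \<in> Gn m d\<close> Gn_subset_lessThan by blast
    ultimately have "s = 1"
      using one_less_m[OF assms(1)] cong_less_imp_eq_nat[of s m 1] by (simp flip: cong_int_iff)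
    then have "d = 1"
      using \<open>s \<in> Gn m d\<close> by (simp add: Gn_def)
    then show False
      using prime_P[OF \<open>d \<in> P\<close>] by simp
  qed
qed

theorem circ_diameter_prime_divisors:
  assumes "card P \<ge> 2"
  shows "circ_diameter m (\<Union>d\<in>P. Gn m d) = 2"
proof -
  have "P \<noteq> {}"
    using assms by auto
  have "circ_diameter m (\<Union>d\<in>P. Gn m d) = enat 2"
  proof (rule circ_diameter_eqI[OF _ _ one_less_m[OF \<open>P \<noteq> {}\<close>] m_pos])
    show "(\<Union>d\<in>P. Gn m d) \<subseteq> {..<m}"
      using Gn_subset_lessThan by blast
    show "\<exists>k\<le>2. step_sum m (\<Union>d\<in>P. Gn m d) k x" for x
      using step_sum_2_prime_divisors[OF assms] by blast
    show "2 \<le> k" if "step_sum m (\<Union>d\<in>P. Gn m d) k (int 1 - int 0)" for k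
      using step_sum_1_imp_ge_2[OF \<open>P \<noteq> {}\<close>] that by simp
  qed
  then show ?thesis
    by (simp add: numeral_eq_enat)
qed

subsection \<open>Steps whose gcd is a squared cofactor\<close>

abbreviation N :: nat where "N \<equiv> 2 * m\<^sup>2"

abbreviation S :: "nat set" where "S \<equiv> \<Union>d\<in>(\<lambda>p. (m div p)\<^sup>2) ` P. Gn N d"

lemma S_subset_lessThan: "S \<subseteq> {..<N}"
  using Gn_subset_lessThan by blast

lemma mem_Gn_cofactor_sq:
  assumes "p \<in> P" "s \<in> Gn N ((m div p)\<^sup>2)"
  shows "odd s" "\<not> p dvd s" "q \<in> P \<Longrightarrow> q \<noteq> p \<Longrightarrow> q\<^sup>2 dvd s"
proof -
  have gcd: "gcd s N = (m div p)\<^sup>2"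
    using assms(2) by (simp add: Gn_def)
  show "odd s"
  proof
    assume "even s"
    then have "2 dvd (m div p)\<^sup>2"
      unfolding gcd[symmetric] by simp
    then show False
      using odd_cofactor[OF assms(1)] by simp
  qed
  show "\<not> p dvd s"
  proof
    assume "p dvd s"
    moreover have "p dvd N"
      using prime_dvd_m[OF assms(1)] by (simp add: power2_eq_square)
    ultimately have "p dvd (m div p)\<^sup>2"
      unfolding gcd[symmetric] by simp
    then have "p dvd m div p"
      using prime_P[OF assms(1)] prime_dvd_power by blast
    then show False
      using prime_dvd_cofactor_iff[OF assms(1,1)] by simp
  qed
  show "q\<^sup>2 dvd s" if "q \<in> P" "q \<noteq> p"
  proof -
    have "q\<^sup>2 dvd (m div p)\<^sup>2"
      using prime_dvd_cofactor_iff[OF assms(1) that(1)] that(2) by simp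
    then show ?thesis
      unfolding gcd[symmetric] using dvd_trans gcd_dvd1 by blast
  qed
qed

lemma odd_of_mem_S: "s \<in> S \<Longrightarrow> odd s"
  using mem_Gn_cofactor_sq(1) by blast

lemma prime_sq_dvd_of_mem_S:
  assumes "s \<in> S" "q \<in> P" "q dvd s"
  shows "q\<^sup>2 dvd s"
proof -
  obtain p where p: "p \<in> P" "s \<in> Gn N ((m div p)\<^sup>2)"
    using assms(1) by blast
  then have "q \<noteq> p"
    using mem_Gn_cofactor_sq(2) assms(3) by auto
  then show ?thesis
    using mem_Gn_cofactor_sq(3)[OF p assms(2)] by simp
qed

lemma card_not_dvd_of_mem_S:
  assumes "s \<in> S"
  shows "card {q \<in> P. \<not> q dvd s} = 1"
proof -
  obtain p where p: "p \<in> P" "s \<in> Gn N ((m div p)\<^sup>2)"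
    using assms by blast
  have "q dvd s" if "q \<in> P" "q \<noteq> p" for q
    using mem_Gn_cofactor_sq(3)[OF p that] by (metis dvd_mult_left power2_eq_square)
  then have "{q \<in> P. \<not> q dvd s} = {p}"
    using mem_Gn_cofactor_sq(2)[OF p] p(1) by auto
  then show ?thesis
    by simp
qed

lemma step_sum_cofactor_sq:
  assumes "p \<in> P" "odd u" "\<not> int p dvd u"
  shows "step_sum N S 1 (int ((m div p)\<^sup>2) * u)"
proof -
  let ?c = "(m div p)\<^sup>2"
  have N_eq: "N = ?c * (2 * p\<^sup>2)"
    using m_eq_mult_cofactor[OF assms(1)] by (metis mult.commute mult.left_commute power_mult_distrib)
  have "coprime u (2 * int p ^ 2)"
    using assms(2,3) prime_imp_coprime[of "int p" u] prime_P[OF assms(1)]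
    by (simp add: coprime_commute)
  then have "gcd (int ?c * u) (int N) = int ?c"
    unfolding N_eq by (simp add: gcd_mult_distrib_int[symmetric])
  moreover have "?c < N"
  proof -
    have "3 * 3 \<le> p * p"
      using mult_le_mono[OF prime_ge_3[OF assms(1)] prime_ge_3[OF assms(1)]] .
    then show ?thesis
      unfolding N_eq using odd_cofactor[OF assms(1)] by (simp add: odd_pos power2_eq_square)
  qed
  moreover have "Gn N ?c \<subseteq> S"
    using assms(1) by blast
  ultimately show ?thesis
    by (intro step_sum_1_of_gcd)
qed

lemma exists_two_steps_localized:
  assumes "p \<in> P"
  shows "\<exists>y. step_sum N S 2 y \<and> even y \<and> [y = x] (mod int p ^ 2)
    \<and> (\<forall>q\<in>P. q \<noteq> p \<longrightarrow> [y = 0] (mod int q ^ 2))"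
proof -
  let ?c = "(m div p)\<^sup>2"
  have "coprime p (m div p)"
    using prime_imp_coprime[OF prime_P[OF assms]] prime_dvd_cofactor_iff[OF assms assms] by simp
  then have "coprime (int p) (2 * int (m div p))"
    using odd_P[OF assms] by simp
  then have "coprime (2 * int ?c) (int p ^ 2)"
    by (simp add: coprime_commute)
  then obtain w where w: "[2 * int ?c * w = 1] (mod int p ^ 2)"
    using cong_solve_coprime_int by blast
  \<comment> \<open>As 2 c w = 1 modulo p^2, the number c (2 w x) is x modulo p^2; splitting the even
    number 2 w x into two odd parts prime to p writes it as a sum of two steps of G_N(c).\<close>
  obtain u v where uv: "2 * w * x = u + v" "odd u" "odd v" "\<not> int p dvd u" "\<not> int p dvd v"
    using even_eq_add_odd_not_dvd[of "2 * w * x" p] prime_ge_3[OF assms] by auto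
  have "step_sum N S (1 + 1) (int ?c * u + int ?c * v)"
    using step_sum_add step_sum_cofactor_sq[OF assms] uv by blast
  then have "step_sum N S 2 (int ?c * (2 * w * x))"
    by (simp add: uv(1) distrib_left numeral_2_eq_2)
  moreover have "[int ?c * (2 * w * x) = x] (mod int p ^ 2)"
    using cong_scalar_right[OF w, of x] by (simp add: ac_simps)
  moreover have "[int ?c * (2 * w * x) = 0] (mod int q ^ 2)" if "q \<in> P" "q \<noteq> p" for q
  proof -
    have "q\<^sup>2 dvd ?c"
      using prime_dvd_cofactor_iff[OF assms that(1)] that(2) by simp
    then show ?thesis
      unfolding cong_0_iff by (metis dvd_mult2 of_nat_dvd_iff of_nat_power)
  qed
  ultimately show ?thesis
    by (intro exI[of _ "int ?c * (2 * w * x)"]) simp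
qed

lemma cong_mod_NI:
  fixes a b :: int
  assumes "\<And>q. q \<in> P \<Longrightarrow> [a = b] (mod int q ^ 2)" "[a = b] (mod 2)"
  shows "[a = b] (mod int N)"
proof -
  have "[a = b] (mod (\<Prod>q\<in>P. int q ^ 2))"
  proof (rule cong_cong_prod_coprime[rule_format])
    show "[a = b] (mod int q ^ 2)" if "q \<in> P" for q
      using assms(1) that .
    show "coprime (int q ^ 2) (int q' ^ 2)" if "q \<in> P" "q' \<in> P" "q \<noteq> q'" for q q'
      using primes_coprime[OF prime_P prime_P, OF that] by simp
  qed
  moreover have "(\<Prod>q\<in>P. int q ^ 2) = int m ^ 2"
    by (simp add: prod_power_distrib)
  moreover have "coprime 2 (int m ^ 2)"
    using odd_m by (simp del: of_nat_prod)
  ultimately show ?thesis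
    using coprime_cong_mult[OF assms(2)] by simp
qed

lemma step_sum_even:
  assumes "even x"
  shows "step_sum N S (2 * card P) x"
proof -
  have "\<forall>p\<in>P. \<exists>y. step_sum N S 2 y \<and> even y \<and> [y = x] (mod int p ^ 2)
      \<and> (\<forall>q\<in>P. q \<noteq> p \<longrightarrow> [y = 0] (mod int q ^ 2))"
    by (intro ballI exists_two_steps_localized)
  from bchoice[OF this] obtain y where y: "\<forall>p\<in>P. step_sum N S 2 (y p) \<and> even (y p)
      \<and> [y p = x] (mod int p ^ 2) \<and> (\<forall>q\<in>P. q \<noteq> p \<longrightarrow> [y p = 0] (mod int q ^ 2))" ..
  have "[(\<Sum>p\<in>P. y p) = x] (mod int q ^ 2)" if q: "q \<in> P" for q
  proof -
    have "[(\<Sum>p\<in>P - {q}. y p) = (\<Sum>p\<in>P - {q}. 0)] (mod int q ^ 2)"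
    proof (rule cong_sum)
      fix p
      assume "p \<in> P - {q}"
      then show "[y p = 0] (mod int q ^ 2)"
        using y q by simp
    qed
    moreover have "[y q = x] (mod int q ^ 2)"
      using y q by simp
    ultimately have "[y q + (\<Sum>p\<in>P - {q}. y p) = x + 0] (mod int q ^ 2)"
      by (intro cong_add) simp_all
    then show ?thesis
      by (simp add: sum.remove[OF finite_P q])
  qed
  moreover have "[(\<Sum>p\<in>P. y p) = x] (mod 2)"
  proof -
    have "even (\<Sum>p\<in>P. y p)"
      using y by (intro dvd_sum) simp
    then show ?thesis
      using assms by (simp add: cong_iff_dvd_diff)
  qed
  ultimately have "[(\<Sum>p\<in>P. y p) = x] (mod int N)"
    by (rule cong_mod_NI)
  moreover have "step_sum N S (\<Sum>p\<in>P. 2) (\<Sum>p\<in>P. y p)"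
    using y by (intro step_sum_sum[OF finite_P]) simp
  ultimately show ?thesis
    using step_sum_cong by (simp add: mult.commute)
qed

lemma step_sum_odd:
  assumes "P \<noteq> {}" "odd x"
  shows "step_sum N S (2 * card P + 1) x"
proof -
  obtain p where p: "p \<in> P"
    using assms(1) by blast
  have "step_sum N S (2 * card P) (x - int ((m div p)\<^sup>2))"
    using step_sum_even odd_cofactor[OF p] assms(2) by simp
  moreover have "step_sum N S 1 (int ((m div p)\<^sup>2))"
    using step_sum_cofactor_sq[OF p, of 1] prime_ge_3[OF p] by simp
  ultimately have "step_sum N S (2 * card P + 1) (x - int ((m div p)\<^sup>2) + int ((m div p)\<^sup>2))"
    by (rule step_sum_add)
  then show ?thesis
    by simp
qed

lemma two_le_length_filter_not_dvd:
  assumes "set xs \<subseteq> S" "[sum_list xs = m] (mod N)" "q \<in> P"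
  shows "2 \<le> length (filter (\<lambda>s. \<not> q dvd s) xs)"
proof (rule ccontr)
  let ?ys = "filter (\<lambda>s. \<not> q dvd s) xs"
  let ?zs = "filter (\<lambda>s. q dvd s) xs"
  have split: "sum_list xs = sum_list ?ys + sum_list ?zs"
    using sum_list_filter_add_filter_not[of "\<lambda>s. \<not> q dvd s" xs] by simp
  have "q\<^sup>2 dvd sum_list ?zs"
    using assms(1,3) prime_sq_dvd_of_mem_S by (intro dvd_sum_list) auto
  moreover have "q\<^sup>2 dvd N"
    using prime_dvd_m[OF assms(3)] by simp
  then have cong_m: "[sum_list xs = m] (mod q\<^sup>2)"
    using assms(2) cong_dvd_modulus_nat by blast
  assume "\<not> 2 \<le> length ?ys"
  then consider "?ys = []" | s where "?ys = [s]"
    by (cases ?ys) (auto simp: Suc_le_eq)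
  then show False
  proof cases
    case 1
    then have "q\<^sup>2 dvd sum_list xs"
      using \<open>q\<^sup>2 dvd sum_list ?zs\<close> split by simp
    then have "q\<^sup>2 dvd m"
      using cong_dvd_iff[OF cong_m] by blast
    then show False
      using prime_sq_not_dvd_m[OF assms(3)] by simp
  next
    case (2 s)
    have "q dvd sum_list xs"
      using cong_m prime_dvd_m[OF assms(3)] cong_dvd_modulus_nat[OF cong_m, of q]
      by (simp add: cong_dvd_iff)
    moreover have "q dvd sum_list ?zs"
      using \<open>q\<^sup>2 dvd sum_list ?zs\<close> by (simp add: power2_eq_square dvd_mult_left)
    ultimately have "q dvd s"
      using split 2 by (simp add: dvd_add_left_iff)
    moreover have "s \<in> set ?ys"
      using 2 by simp
    ultimately show False
      by simp
  qed
qed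

lemma step_sum_m_imp_ge:
  assumes "step_sum N S k (int m)"
  shows "2 * card P + 1 \<le> k"
proof -
  obtain xs where xs: "length xs = k" "set xs \<subseteq> S" "[int (sum_list xs) = int m] (mod int N)"
    using assms unfolding step_sum_def by blast
  have cong_m: "[sum_list xs = m] (mod N)"
    using xs(3) by (simp only: cong_int_iff)
  then have "[sum_list xs = m] (mod 2)"
    by (rule cong_dvd_modulus_nat) simp
  then have "odd (sum_list xs)"
    using odd_m by (simp add: cong_def odd_iff_mod_2_eq_one)
  then have "odd k"
    using odd_sum_list_iff[of xs] xs odd_of_mem_S by blast
  have "k = (\<Sum>q\<in>P. length (filter (\<lambda>s. \<not> q dvd s) xs))"
    using length_eq_sum_length_filter[OF finite_P, of xs "\<lambda>q s. \<not> q dvd s"] xs card_not_dvd_of_mem_S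
    by auto
  moreover have "(\<Sum>q\<in>P. 2) \<le> (\<Sum>q\<in>P. length (filter (\<lambda>s. \<not> q dvd s) xs))"
    using two_le_length_filter_not_dvd[OF xs(2) cong_m] by (intro sum_mono) auto
  ultimately have "2 * card P \<le> k"
    by simp
  then show ?thesis
    using \<open>odd k\<close> by presburger
qed

theorem circ_diameter_cofactor_squares:
  assumes "P \<noteq> {}"
  shows "circ_diameter N S = enat (2 * card P + 1)"
proof (rule circ_diameter_eqI[OF S_subset_lessThan])
  show "\<exists>k\<le>2 * card P + 1. step_sum N S k x" for x
  proof (cases "even x")
    case True
    then show ?thesis
      using step_sum_even by (intro exI[of _ "2 * card P"]) auto
  next
    case False
    then show ?thesis
      using step_sum_odd[OF assms] by (intro exI[of _ "2 * card P + 1"]) auto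
  qed
  show "m < N" "0 < N"
    using m_pos by (auto simp: power2_eq_square)
  show "2 * card P + 1 \<le> k" if "step_sum N S k (int m - int 0)" for k
    using step_sum_m_imp_ge that by simp
qed

end

theorem theorem5:
  shows "(\<forall>P :: nat set. finite P \<and> card P \<ge> 3 \<and> (\<forall>p\<in>P. prime p \<and> odd p) \<longrightarrow>
            (let n = \<Prod>P in circ_diameter n (\<Union>d\<in>P. Gn n d) = 2))
       \<and> (\<forall>P :: nat set. finite P \<and> card P \<ge> 1 \<and> (\<forall>p\<in>P. prime p \<and> odd p) \<longrightarrow>
            (let m = \<Prod>P; n = 2 * m^2; D = (\<lambda>p. (m div p)^2) ` P in
             circ_diameter n (\<Union>d\<in>D. Gn n d) = enat (2 * card P + 1)))"
proof (intro conjI allI impI)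
  fix P :: "nat set"
  assume P: "finite P \<and> card P \<ge> 3 \<and> (\<forall>p\<in>P. prime p \<and> odd p)"
  then interpret odd_prime_set P
    by unfold_locales auto
  show "let n = \<Prod>P in circ_diameter n (\<Union>d\<in>P. Gn n d) = 2"
    using circ_diameter_prime_divisors P by simp
next
  fix P :: "nat set"
  assume P: "finite P \<and> card P \<ge> 1 \<and> (\<forall>p\<in>P. prime p \<and> odd p)"
  then interpret odd_prime_set P
    by unfold_locales auto
  have "P \<noteq> {}"
    using P by auto
  then show "let m = \<Prod>P; n = 2 * m^2; D = (\<lambda>p. (m div p)^2) ` P in
      circ_diameter n (\<Union>d\<in>D. Gn n d) = enat (2 * card P + 1)"
    using circ_diameter_cofactor_squares by (simp add: Let_def)
qed

end
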